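(* Let $\sigma:\mathcal C^*\to\mathcal B^*$ and $\varphi:\mathcal B^*\to\mathcal A^*$ be morphisms of class $P_{ret}$ (with $\mathcal A,\mathcal B,\mathcal C$ finite alphabets). Then the composition $\varphi\sigma:\mathcal C^*\to\mathcal A^*$ is of class $P_{ret}$.
   Context: For a finite word $w$, $\overline{w}$ denotes its reversal; $w$ is a palindrome if $w=\overline w$. A morphism $\varphi:\mathcal B^*\to\mathcal A^*$ is of class $P_{ret}$ if there exists a palindrome $p\in\mathcal A^*$ such that: (a) $\varphi(b)p$ is a palindrome for every $b\in\mathcal B$; (b) for every $b\in\mathcal B$, $\varphi(b)p$ contains exactly two occurrences of $p$, one as a prefix and one as a suffix; (c) $\varphi(b)\ne\varphi(c)$ for all distinct $b,c\in\mathcal B$. *)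

theory Defs
  imports Main "HOL-Library.Sublist"
begin

text \<open>A morphism between free monoids is determined by the images of letters;
  a letter map f :: 'b => 'a list is extended to words by concatenation.\<close>

definition morph :: "('b \<Rightarrow> 'a list) \<Rightarrow> 'b list \<Rightarrow> 'a list" where
  "morph f w = concat (map f w)"

definition palindrome :: "'a list \<Rightarrow> bool" where
  "palindrome w \<longleftrightarrow> rev w = w"

definition occurrences :: "'a list \<Rightarrow> 'a list \<Rightarrow> nat set" where
  "occurrences p w = {i. i + length p \<le> length w \<and> take (length p) (drop i w) = p}"

definition P_ret :: "('b \<Rightarrow> 'a list) \<Rightarrow> bool" where
  "P_ret f \<longleftrightarrow> (\<exists>p. palindrome p \<and>
     (\<forall>b. palindrome (f b @ p)) \<and>
     (\<forall>b. card (occurrences p (f b @ p)) = 2 \<and>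
          prefix p (f b @ p) \<and> suffix p (f b @ p)) \<and>
     (\<forall>b c. b \<noteq> c \<longrightarrow> f b \<noteq> f c))"

end

theory Submission
  imports Defs
begin

text \<open>Let \<open>p\<close> be the palindrome of \<open>\<phi>\<close> and \<open>q\<close> that of \<open>\<sigma>\<close>; the palindrome of the composition is
  \<open>P = \<phi>(q) p\<close>. Since every \<open>\<phi>(b) p\<close> is a palindrome starting with \<open>p\<close>, we have
  \<open>\<phi>(w) p = p \<cdot> (reversed images)\<close>, so \<open>\<phi>(w) p\<close> is a palindrome whenever \<open>w\<close> is. Because \<open>p\<close>
  occurs in \<open>\<phi>(b) p\<close> only as prefix and suffix, the occurrences of \<open>p\<close> in \<open>\<phi>(w) p\<close> sit exactly
  at the cut points between the blocks \<open>\<phi>(b)\<close>, and \<open>\<phi>(u) p\<close> being a prefix of \<open>\<phi>(v) p\<close> forces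
  \<open>u\<close> to be a prefix of \<open>v\<close>. Hence an occurrence of \<open>P\<close> in \<open>\<phi>(\<sigma>(c)) P = \<phi>(\<sigma>(c) q) p\<close> is the
  image of an occurrence of \<open>q\<close> in \<open>\<sigma>(c) q\<close>, of which there are exactly two.\<close>

lemma morph_simps [simp]:
  "morph f [] = []"
  "morph f (b # w) = f b @ morph f w"
  "morph f (u @ v) = morph f u @ morph f v"
  by (simp_all add: morph_def)

lemma in_occurrences_iff:
  "i \<in> occurrences p w \<longleftrightarrow> i + length p \<le> length w \<and> take (length p) (drop i w) = p"
  by (simp add: occurrences_def)

lemma in_occurrences_iff_prefix_drop:
  "i \<in> occurrences p w \<longleftrightarrow> i \<le> length w \<and> prefix p (drop i w)"
proof -
  have "prefix p (drop i w) \<longleftrightarrow> length p \<le> length (drop i w) \<and> take (length p) (drop i w) = p"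
    by (metis append_eq_conv_conj prefix_def prefix_length_le)
  then show ?thesis by (auto simp: in_occurrences_iff)
qed

lemma zero_in_occurrences_iff: "0 \<in> occurrences p w \<longleftrightarrow> prefix p w"
  by (simp add: in_occurrences_iff_prefix_drop)

lemma in_occurrences_prefix_pattern:
  "prefix p' p \<Longrightarrow> i \<in> occurrences p w \<Longrightarrow> i \<in> occurrences p' w"
  by (auto simp: in_occurrences_iff_prefix_drop intro: prefix_order.trans)

lemma in_occurrences_prefix_iff:
  assumes "prefix w' w" and "i + length p \<le> length w'"
  shows "i \<in> occurrences p w \<longleftrightarrow> i \<in> occurrences p w'"
  using assms by (auto simp: in_occurrences_iff prefix_def)

text \<open>The prefix and suffix conditions of \<open>P_ret\<close> are omitted here: they follow from the
  palindrome conditions (see \<open>P_ret_iff\<close>).\<close>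
locale P_ret_morphism =
  fixes f :: "'b \<Rightarrow> 'a list" and p :: "'a list"
  assumes palindrome_return: "palindrome p"
    and palindrome_image_append: "palindrome (f b @ p)"
    and card_occurrences_image: "card (occurrences p (f b @ p)) = 2"
    and inj_images: "inj f"
begin

lemma image_append_conv: "f b @ p = p @ rev (f b)"
  using palindrome_image_append[of b] palindrome_return by (metis palindrome_def rev_append)

lemma image_nonempty: "f b \<noteq> []"
proof
  assume "f b = []"
  then have "occurrences p (f b @ p) = {0}" by (auto simp: in_occurrences_iff)
  with card_occurrences_image[of b] show False by simp
qed

lemma occurrences_image: "occurrences p (f b @ p) = {0, length (f b)}"
proof -
  have "0 \<in> occurrences p (f b @ p)"
    using image_append_conv[of b] by (simp add: zero_in_occurrences_iff)
  then have "{0, length (f b)} \<subseteq> occurrences p (f b @ p)"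
    by (simp add: in_occurrences_iff)
  moreover have "card {0, length (f b)} = 2" using image_nonempty[of b] by simp
  ultimately show ?thesis
    using card_occurrences_image[of b] card_subset_eq
    by (metis card.infinite zero_neq_numeral)
qed

lemma morph_append_conv: "morph f w @ p = p @ morph (\<lambda>b. rev (f b)) w"
proof (induction w)
  case Nil
  then show ?case by simp
next
  case (Cons b w)
  have "morph f (b # w) @ p = f b @ (morph f w @ p)" by simp
  also have "\<dots> = (f b @ p) @ morph (\<lambda>b. rev (f b)) w" using Cons by simp
  also have "\<dots> = p @ morph (\<lambda>b. rev (f b)) (b # w)" by (simp add: image_append_conv)
  finally show ?case .
qed

lemma prefix_morph_append_mono:
  assumes "prefix u w"
  shows "prefix (morph f u @ p) (morph f w @ p)"
  using assms by (auto simp: prefix_def morph_append_conv)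

lemma palindrome_morph_append:
  assumes "palindrome w"
  shows "palindrome (morph f w @ p)"
proof -
  have "rev (morph f w @ p) = p @ morph (\<lambda>b. rev (f b)) (rev w)"
    using palindrome_return by (simp add: palindrome_def morph_def rev_concat rev_map comp_def)
  also have "\<dots> = morph f w @ p"
    using assms by (simp add: palindrome_def morph_append_conv)
  finally show ?thesis by (simp add: palindrome_def)
qed

lemma occurrence_at_first_cut: "length (f b) \<in> occurrences p (morph f (b # w) @ p)"
proof -
  have "prefix (f b @ p) (morph f (b # w) @ p)"
    using prefix_morph_append_mono[of "[b]" "b # w"] by simp
  from in_occurrences_prefix_iff[OF this, of "length (f b)" p] show ?thesis
    using occurrences_image[of b] by simp
qed

lemma first_image_not_shorter:
  assumes "prefix x y \<or> prefix y x"
    and x: "x = morph f (b # u) @ p" and y: "y = morph f (b' # v) @ p"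
  shows "\<not> length (f b) < length (f b')"
proof
  assume less: "length (f b) < length (f b')"
  have "length (f b) \<in> occurrences p x" using occurrence_at_first_cut x by simp
  moreover have "length (f b) + length p \<le> length x" "length (f b) + length p \<le> length y"
    using less x y by simp_all
  ultimately have "length (f b) \<in> occurrences p y"
    using assms(1) in_occurrences_prefix_iff[of x y] in_occurrences_prefix_iff[of y x] by blast
  moreover have "prefix (f b' @ p) y"
    using prefix_morph_append_mono[of "[b']" "b' # v"] y by simp
  ultimately have "length (f b) \<in> occurrences p (f b' @ p)"
    using less in_occurrences_prefix_iff[of "f b' @ p" y "length (f b)" p] by simp
  then show False
    using less occurrences_image[of b'] image_nonempty[of b] by auto
qed

lemma prefix_morph_append_cancel:
  "prefix (morph f u @ p) (morph f v @ p) \<Longrightarrow> prefix u v"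
proof (induction u arbitrary: v)
  case Nil
  then show ?case by simp
next
  case (Cons b u)
  then obtain b' v' where v: "v = b' # v'"
    using image_nonempty[of b] prefix_length_le by (cases v) fastforce+
  have "length (f b) = length (f b')"
    using first_image_not_shorter Cons.prems v by (metis linorder_neqE_nat)
  moreover obtain r where "f b' @ morph f v' @ p = f b @ (morph f u @ p) @ r"
    using Cons.prems v by (auto simp: prefix_def)
  ultimately have "f b = f b'" by (metis append_eq_append_conv)
  then have "b = b'" using inj_images by (simp add: inj_eq)
  with Cons v show ?case by simp
qed

lemma inj_morph: "inj (morph f)"
  by (rule injI) (metis prefix_morph_append_cancel prefix_order.order_refl prefix_order.antisym)

lemma occurrences_morph_append:
  "i \<in> occurrences p (morph f w @ p) \<Longrightarrow> \<exists>u v. w = u @ v \<and> i = length (morph f u)"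
proof (induction w arbitrary: i)
  case Nil
  then show ?case by (simp add: in_occurrences_iff)
next
  case (Cons b w)
  show ?case
  proof (cases "i < length (f b)")
    case True
    have "prefix (f b @ p) (morph f (b # w) @ p)"
      using prefix_morph_append_mono[of "[b]" "b # w"] by simp
    from in_occurrences_prefix_iff[OF this, of i p] Cons.prems True
    have "i \<in> occurrences p (f b @ p)" by simp
    then have "i = 0" using occurrences_image True by auto
    then show ?thesis by (intro exI[of _ "[]"] exI[of _ "b # w"]) simp
  next
    case False
    then have "i - length (f b) \<in> occurrences p (morph f w @ p)"
      using Cons.prems by (auto simp: in_occurrences_iff)
    then obtain u v where "w = u @ v" "i - length (f b) = length (morph f u)"
      using Cons.IH by blast
    with False show ?thesis by (intro exI[of _ "b # u"] exI[of _ v]) auto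
  qed
qed

lemma occurrences_morph_append_image:
  assumes "i \<in> occurrences (morph f q @ p) (morph f w @ p)"
  shows "\<exists>u v. w = u @ v \<and> i = length (morph f u) \<and> prefix q v"
proof -
  have "prefix p (morph f q @ p)" by (simp add: morph_append_conv)
  from in_occurrences_prefix_pattern[OF this assms]
  have "i \<in> occurrences p (morph f w @ p)" .
  then obtain u v where uv: "w = u @ v" "i = length (morph f u)"
    using occurrences_morph_append by blast
  with assms have "prefix (morph f q @ p) (morph f v @ p)"
    by (simp add: in_occurrences_iff_prefix_drop)
  with uv show ?thesis using prefix_morph_append_cancel by blast
qed

end

lemma P_ret_iff: "P_ret f \<longleftrightarrow> (\<exists>p. P_ret_morphism f p)"
proof
  assume "P_ret f"
  then obtain p where "palindrome p" "\<And>b. palindrome (f b @ p)"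
    "\<And>b. card (occurrences p (f b @ p)) = 2" "\<And>b c. b \<noteq> c \<Longrightarrow> f b \<noteq> f c"
    unfolding P_ret_def by blast
  then have "P_ret_morphism f p"
    by unfold_locales (auto simp: inj_def)
  then show "\<exists>p. P_ret_morphism f p" ..
next
  assume "\<exists>p. P_ret_morphism f p"
  then obtain p where "P_ret_morphism f p" ..
  then interpret P_ret_morphism f p .
  show "P_ret f"
    unfolding P_ret_def
  proof (intro exI[of _ p] conjI allI impI)
    fix b c
    show "prefix p (f b @ p)" by (simp add: image_append_conv)
    show "suffix p (f b @ p)" by (simp add: suffix_def)
    show "b \<noteq> c \<Longrightarrow> f b \<noteq> f c" using inj_images by (simp add: inj_eq)
  qed (fact palindrome_return palindrome_image_append card_occurrences_image)+
qed

lemma occurrences_comp_image: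
  assumes \<sigma>: "P_ret_morphism \<sigma> q" and \<phi>: "P_ret_morphism \<phi> p"
  shows "occurrences (morph \<phi> q @ p) (morph \<phi> (\<sigma> c) @ morph \<phi> q @ p)
    = {0, length (morph \<phi> (\<sigma> c))}"
proof -
  interpret \<sigma>: P_ret_morphism \<sigma> q by (fact \<sigma>)
  interpret \<phi>: P_ret_morphism \<phi> p by (fact \<phi>)
  have "morph \<phi> (\<sigma> c) @ morph \<phi> q @ p = morph \<phi> (\<sigma> c @ q) @ p" by simp
  moreover have "occurrences (morph \<phi> q @ p) (morph \<phi> (\<sigma> c @ q) @ p)
    \<subseteq> {0, length (morph \<phi> (\<sigma> c))}"
  proof
    fix i
    assume "i \<in> occurrences (morph \<phi> q @ p) (morph \<phi> (\<sigma> c @ q) @ p)"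
    then obtain u v where uv: "\<sigma> c @ q = u @ v" "i = length (morph \<phi> u)" "prefix q v"
      using \<phi>.occurrences_morph_append_image by blast
    then have "length u \<in> occurrences q (\<sigma> c @ q)"
      by (simp add: in_occurrences_iff_prefix_drop)
    then have "length u = 0 \<or> length u = length (\<sigma> c)"
      using \<sigma>.occurrences_image by blast
    then have "u = [] \<or> u = \<sigma> c"
      using uv(1) by (metis append_eq_append_conv length_0_conv)
    with uv show "i \<in> {0, length (morph \<phi> (\<sigma> c))}" by auto
  qed
  moreover have "prefix (morph \<phi> q @ p) (morph \<phi> (\<sigma> c @ q) @ p)"
    using \<phi>.prefix_morph_append_mono[of q "\<sigma> c @ q"] \<sigma>.image_append_conv[of c] by simp
  then have "{0, length (morph \<phi> (\<sigma> c))} \<subseteq> occurrences (morph \<phi> q @ p) (morph \<phi> (\<sigma> c @ q) @ p)"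
    by (simp add: zero_in_occurrences_iff) (simp add: in_occurrences_iff)
  ultimately show ?thesis by auto
qed

lemma P_ret_morphism_comp:
  assumes \<sigma>: "P_ret_morphism \<sigma> q" and \<phi>: "P_ret_morphism \<phi> p"
  shows "P_ret_morphism (\<lambda>c. morph \<phi> (\<sigma> c)) (morph \<phi> q @ p)"
proof -
  interpret \<sigma>: P_ret_morphism \<sigma> q by (fact \<sigma>)
  interpret \<phi>: P_ret_morphism \<phi> p by (fact \<phi>)
  show ?thesis
  proof
    show "palindrome (morph \<phi> q @ p)"
      using \<sigma>.palindrome_return by (rule \<phi>.palindrome_morph_append)
    fix c
    show "palindrome (morph \<phi> (\<sigma> c) @ morph \<phi> q @ p)"
      using \<phi>.palindrome_morph_append[OF \<sigma>.palindrome_image_append[of c]] by simp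
    have "morph \<phi> (\<sigma> c) \<noteq> []"
      using \<sigma>.image_nonempty[of c] \<phi>.image_nonempty by (cases "\<sigma> c") auto
    then show "card (occurrences (morph \<phi> q @ p) (morph \<phi> (\<sigma> c) @ morph \<phi> q @ p)) = 2"
      by (simp add: occurrences_comp_image[OF \<sigma> \<phi>])
  next
    show "inj (\<lambda>c. morph \<phi> (\<sigma> c))"
      using inj_compose[OF \<phi>.inj_morph \<sigma>.inj_images] by (simp add: comp_def)
  qed
qed

theorem proposition5p3:
  fixes \<sigma> :: "'c::finite \<Rightarrow> 'b::finite list"
    and \<phi> :: "'b \<Rightarrow> 'a::finite list"
  assumes "P_ret \<sigma>" and "P_ret \<phi>"
  shows "P_ret (\<lambda>c. morph \<phi> (\<sigma> c))"
  using assms P_ret_morphism_comp unfolding P_ret_iff by blast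

end
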